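(* Let $K$ be a field of characteristic zero, $x=(x_1,\dots,x_n)$, $y=(y_1,\dots,y_n)$, let $F\in K[x]^n$ be a polynomial map and $f\in K[x]$. Set $G:=\nabla_{x,y}\big(f+y^{\mathsf T}F\big)\in K[x,y]^{2n}$. Then $\det\mathcal{J}_{x,y}G=(-1)^n(\det\mathcal{J}F)^2$, and $F$ is invertible if and only if $G$ is invertible. Furthermore, if $F$ is a Keller map, then $$\mu_1G_1+\mu_2G_2+\cdots+\mu_{2n}G_{2n}+\mu_{2n+1}$$ is irreducible for all $\mu\in K^{2n+1}$ such that $\mu_i\neq 0$ for some $i\le n$.
   Context: $\nabla_{x,y}$ is the gradient (column vector of partial derivatives) with respect to $x_1,\dots,x_n,y_1,\dots,y_n$; $y^{\mathsf T}F=\sum_j y_jF_j$. $\mathcal{J}$ denotes the Jacobian matrix. A Keller map is a polynomial map $F\in K[x]^n$ with $\det\mathcal{J}F\in K^{*}$. *)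

theory Defs
  imports "HOL-Library.Poly_Mapping" "HOL-Computational_Algebra.Factorial_Ring"
    "Jordan_Normal_Form.Determinant"
begin

text \<open>With n fixed, the
  variables x_1..x_n are z_0..z_(n-1) and y_1..y_n are z_n..z_(2n-1).\<close>

type_synonym 'a mpoly = "(nat \<Rightarrow>\<^sub>0 nat) \<Rightarrow>\<^sub>0 'a"

definition Const :: "'a::zero \<Rightarrow> 'a mpoly" where
  "Const c = Poly_Mapping.single 0 c"

definition Var :: "nat \<Rightarrow> 'a::{zero,one} mpoly" where
  "Var i = Poly_Mapping.single (Poly_Mapping.single i 1) 1"

definition vars_in :: "'a::zero mpoly \<Rightarrow> nat set \<Rightarrow> bool" where
  "vars_in p S \<longleftrightarrow> (\<forall>m \<in> Poly_Mapping.keys p. Poly_Mapping.keys m \<subseteq> S)"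

definition pdiff :: "nat \<Rightarrow> 'a::comm_semiring_1 mpoly \<Rightarrow> 'a mpoly" where
  "pdiff i p = (\<Sum>m \<in> Poly_Mapping.keys p.
      Poly_Mapping.single (m - Poly_Mapping.single i 1)
        (of_nat (Poly_Mapping.lookup m i) * Poly_Mapping.lookup p m))"

definition subst :: "(nat \<Rightarrow> 'a::comm_semiring_1 mpoly) \<Rightarrow> 'a mpoly \<Rightarrow> 'a mpoly" where
  "subst s p = (\<Sum>m \<in> Poly_Mapping.keys p.
      Const (Poly_Mapping.lookup p m) *
      (\<Prod>v \<in> Poly_Mapping.keys m. s v ^ Poly_Mapping.lookup m v))"

definition jac :: "nat \<Rightarrow> (nat \<Rightarrow> 'a::comm_ring_1 mpoly) \<Rightarrow> 'a mpoly mat" where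
  "jac N P = mat N N (\<lambda>(i,j). pdiff j (P i))"

definition poly_map_invertible :: "nat \<Rightarrow> (nat \<Rightarrow> 'a::comm_semiring_1 mpoly) \<Rightarrow> bool" where
  "poly_map_invertible N P \<longleftrightarrow>
     (\<exists>Q. (\<forall>i<N. vars_in (Q i) {..<N}) \<and>
          (\<forall>i<N. subst Q (P i) = Var i) \<and>
          (\<forall>i<N. subst P (Q i) = Var i))"

definition keller :: "nat \<Rightarrow> (nat \<Rightarrow> 'a::comm_ring_1 mpoly) \<Rightarrow> bool" where
  "keller N P \<longleftrightarrow> (\<exists>c. c \<noteq> 0 \<and> det (jac N P) = Const c)"

end

theory Submission
  imports Defs "HOL-Computational_Algebra.Polynomial"
begin

text \<open>Write G = (\<nabla>f + J(F)^T y, F). Exchanging its first n and last n components turns J(G)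
  into a block lower triangular matrix with diagonal blocks J(F) and J(F)^T, which gives the
  determinant. If Q inverts F, then F is a Keller map, so J(F) has a polynomial inverse, and
  G(x, y) = (u, v) is solved polynomially by x = Q(v), y = J(F)(x)^(-T) (u - \<nabla>f(x)).
  Conversely, if H inverts G, the chain rule applied to H \<circ> G = id together with the
  invertibility of J(F) shows that the x-components of H do not depend on u, and they then
  invert F. Finally, a combination \<mu>^T G + \<mu>_(2n+1) is affine in y, with y-coefficients
  J(F) (\<mu>_1, ..., \<mu>_n); in a factorisation one factor is free of y, so it divides these
  coefficients and hence, via the adjugate of J(F), the nonzero constant det J(F) \<mu>_i.\<close>

lemma poly_mapping_sum_single:
  fixes p :: "'k \<Rightarrow>\<^sub>0 'b::comm_monoid_add"
  shows "p = (\<Sum>m\<in>Poly_Mapping.keys p. Poly_Mapping.single m (Poly_Mapping.lookup p m))"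
proof (rule poly_mapping_eqI)
  fix k
  have "Poly_Mapping.lookup (\<Sum>m\<in>Poly_Mapping.keys p. Poly_Mapping.single m (Poly_Mapping.lookup p m)) k
      = (\<Sum>m\<in>Poly_Mapping.keys p. (if m = k then Poly_Mapping.lookup p m else 0))"
    by (simp add: lookup_sum lookup_single when_def)
  also have "\<dots> = Poly_Mapping.lookup p k"
    by (simp add: sum.delta' in_keys_iff)
  finally show "Poly_Mapping.lookup p k =
      Poly_Mapping.lookup (\<Sum>m\<in>Poly_Mapping.keys p. Poly_Mapping.single m (Poly_Mapping.lookup p m)) k"
    by simp
qed

lemma poly_mapping_induct_single [case_names zero single add]:
  fixes p :: "'k \<Rightarrow>\<^sub>0 'b::comm_monoid_add"
  assumes "P 0" "\<And>m c. P (Poly_Mapping.single m c)" "\<And>p q. P p \<Longrightarrow> P q \<Longrightarrow> P (p + q)"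
  shows "P p"
proof -
  have "P (\<Sum>m\<in>S. Poly_Mapping.single m (Poly_Mapping.lookup p m))" if "finite S" for S
    using that by (induction S rule: finite_induct) (auto intro: assms)
  then show ?thesis by (subst poly_mapping_sum_single) simp
qed

text \<open>The additive extension of a function on terms c z^m; pdiff, subst and the grading
  below are all of this form.\<close>
definition mpoly_extend :: "((nat \<Rightarrow>\<^sub>0 nat) \<Rightarrow> 'a::zero \<Rightarrow> 'b::comm_monoid_add) \<Rightarrow> 'a mpoly \<Rightarrow> 'b" where
  "mpoly_extend g p = (\<Sum>m\<in>Poly_Mapping.keys p. g m (Poly_Mapping.lookup p m))"

lemma mpoly_extend_zero [simp]: "mpoly_extend g 0 = 0"
  by (simp add: mpoly_extend_def)

lemma mpoly_extend_superset:
  assumes "finite S" "Poly_Mapping.keys p \<subseteq> S" "\<And>m. g m 0 = 0"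
  shows "mpoly_extend g p = (\<Sum>m\<in>S. g m (Poly_Mapping.lookup p m))"
  unfolding mpoly_extend_def
  by (rule sum.mono_neutral_left) (use assms in \<open>auto simp: in_keys_iff\<close>)

lemma mpoly_extend_single:
  assumes "\<And>m. g m 0 = 0"
  shows "mpoly_extend g (Poly_Mapping.single m c) = g m c"
  using assms by (cases "c = 0") (auto simp: mpoly_extend_def)

lemma mpoly_extend_add:
  fixes p q :: "'a::comm_monoid_add mpoly"
  assumes "\<And>m. g m 0 = 0" "\<And>m a b. g m (a + b) = g m a + g m b"
  shows "mpoly_extend g (p + q) = mpoly_extend g p + mpoly_extend g q"
proof -
  let ?S = "Poly_Mapping.keys p \<union> Poly_Mapping.keys q"
  have "mpoly_extend g (p + q) = (\<Sum>m\<in>?S. g m (Poly_Mapping.lookup (p + q) m))"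
    by (rule mpoly_extend_superset) (use assms keys_add[of p q] in auto)
  also have "\<dots> = (\<Sum>m\<in>?S. g m (Poly_Mapping.lookup p m)) + (\<Sum>m\<in>?S. g m (Poly_Mapping.lookup q m))"
    by (simp add: lookup_add assms sum.distrib)
  also have "\<dots> = mpoly_extend g p + mpoly_extend g q"
    by (subst (1 2) mpoly_extend_superset[of ?S]) (use assms in auto)
  finally show ?thesis .
qed

lemma mpoly_extend_sum:
  fixes h :: "'i \<Rightarrow> 'a::comm_monoid_add mpoly"
  assumes "\<And>m. g m 0 = 0" "\<And>m a b. g m (a + b) = g m a + g m b"
  shows "mpoly_extend g (\<Sum>i\<in>I. h i) = (\<Sum>i\<in>I. mpoly_extend g (h i))"
  by (induction I rule: infinite_finite_induct) (simp_all add: mpoly_extend_add assms)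

lemma mpoly_extend_mult:
  fixes g :: "(nat \<Rightarrow>\<^sub>0 nat) \<Rightarrow> 'a::comm_semiring_1 \<Rightarrow> 'b::comm_semiring_1"
  assumes g_zero: "\<And>m. g m 0 = 0" and g_add: "\<And>m a b. g m (a + b) = g m a + g m b"
    and g_mult: "\<And>a b c d. g (a + b) (c * d) = g a c * g b d"
  shows "mpoly_extend g (p * q) = mpoly_extend g p * mpoly_extend g q"
proof (induction p arbitrary: q rule: poly_mapping_induct_single)
  case (single m c)
  show ?case
  proof (induction q rule: poly_mapping_induct_single)
    case (single m' c')
    show ?case
      by (simp only: mult_single mpoly_extend_single[of g, OF g_zero] g_mult)
  qed (simp_all add: distrib_left mpoly_extend_add[of g, OF g_zero g_add])
qed (simp_all add: distrib_right mpoly_extend_add[of g, OF g_zero g_add])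

lemma mpoly_extend_single_id: "mpoly_extend Poly_Mapping.single p = p"
  unfolding mpoly_extend_def by (rule poly_mapping_sum_single[symmetric])

lemma Const_0 [simp]: "Const 0 = 0"
  by (simp add: Const_def)

lemma Const_1 [simp]: "Const 1 = (1::'a::comm_semiring_1 mpoly)"
  by (simp add: Const_def)

lemma Const_add: "Const (a + b) = Const a + (Const b :: 'a::monoid_add mpoly)"
  by (simp add: Const_def single_add)

lemma Const_mult: "Const (a * b) = Const a * (Const b :: 'a::semiring_0 mpoly)"
  by (simp add: Const_def mult_single)

lemma Const_eq_0_iff [simp]: "Const a = 0 \<longleftrightarrow> a = 0"
  unfolding Const_def by (metis lookup_single_eq single_zero lookup_zero)

lemma Const_dvd_1: "c \<noteq> 0 \<Longrightarrow> Const (c::'a::field) dvd 1"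
  by (rule dvdI[of _ _ "Const (inverse c)"]) (simp add: Const_mult[symmetric])

lemma Var_power:
  "Var v ^ k = (Poly_Mapping.single (Poly_Mapping.single v k) 1 :: 'a::comm_semiring_1 mpoly)"
proof (induction k)
  case (Suc k)
  have "Var v ^ Suc k = Poly_Mapping.single (Poly_Mapping.single v 1) 1 *
      Poly_Mapping.single (Poly_Mapping.single v k) (1::'a)"
    by (subst power_Suc, subst Suc, simp add: Var_def)
  also have "\<dots> = Poly_Mapping.single (Poly_Mapping.single v 1 + Poly_Mapping.single v k) 1"
    by (simp only: mult_single mult_1)
  finally show ?case
    by (simp only: single_add[symmetric] plus_1_eq_Suc)
qed simp

lemma prod_single_1:
  "(\<Prod>v\<in>S. Poly_Mapping.single (f v) (1::'a::comm_semiring_1)) = Poly_Mapping.single (\<Sum>v\<in>S. f v) 1"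
proof (induction S rule: infinite_finite_induct)
  case (insert x S)
  then show ?case
    by (simp only: prod.insert[OF insert(1,2)] sum.insert[OF insert(1,2)] insert(3)
        mult_single mult_1)
qed simp_all

lemma single_eq_Const_mult_prod_Var:
  "(Poly_Mapping.single m c :: 'a::comm_semiring_1 mpoly) =
     Const c * (\<Prod>v\<in>Poly_Mapping.keys m. Var v ^ Poly_Mapping.lookup m v)"
proof -
  have "(\<Prod>v\<in>Poly_Mapping.keys m. (Var v ^ Poly_Mapping.lookup m v :: 'a mpoly))
      = Poly_Mapping.single (\<Sum>v\<in>Poly_Mapping.keys m. Poly_Mapping.single v (Poly_Mapping.lookup m v)) 1"
    by (simp only: Var_power prod_single_1)
  also have "\<dots> = Poly_Mapping.single m 1"
    by (simp only: poly_mapping_sum_single[symmetric])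
  finally show ?thesis
    by (simp add: Const_def mult_single)
qed

lemma vars_in_0 [simp]: "vars_in 0 S"
  by (simp add: vars_in_def)

lemma vars_in_Const [simp]: "vars_in (Const c) S"
  by (simp add: vars_in_def Const_def)

lemma vars_in_UNIV [simp]: "vars_in p UNIV"
  by (simp add: vars_in_def)

lemma vars_in_Var: "v \<in> S \<Longrightarrow> vars_in (Var v :: 'a::zero_neq_one mpoly) S"
  by (simp add: vars_in_def Var_def)

lemma vars_in_single: "Poly_Mapping.keys m \<subseteq> S \<Longrightarrow> vars_in (Poly_Mapping.single m c) S"
  by (simp add: vars_in_def)

lemma vars_in_mono: "vars_in p S \<Longrightarrow> S \<subseteq> T \<Longrightarrow> vars_in p T"
  unfolding vars_in_def by blast

lemma vars_in_add: "vars_in p S \<Longrightarrow> vars_in q S \<Longrightarrow> vars_in (p + q :: 'a::monoid_add mpoly) S"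
  unfolding vars_in_def using keys_add[of p q] by blast

lemma vars_in_diff:
  assumes "vars_in p S" "vars_in q S"
  shows "vars_in (p - q :: 'a::ab_group_add mpoly) S"
proof -
  have "Poly_Mapping.keys (- q) = Poly_Mapping.keys q"
    by (auto simp: in_keys_iff)
  then show ?thesis
    using assms unfolding diff_conv_add_uminus by (intro vars_in_add) (simp_all add: vars_in_def)
qed

lemma vars_in_mult: "vars_in p S \<Longrightarrow> vars_in q S \<Longrightarrow> vars_in (p * q :: 'a::comm_semiring_1 mpoly) S"
proof -
  assume "vars_in p S" "vars_in q S"
  then have "Poly_Mapping.keys (a + b) \<subseteq> S"
    if "a \<in> Poly_Mapping.keys p" "b \<in> Poly_Mapping.keys q" for a b
    using that keys_add[of a b] unfolding vars_in_def by blast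
  then show ?thesis
    unfolding vars_in_def using keys_mult[of p q] by blast
qed

lemma vars_in_sum:
  "(\<And>i. i \<in> I \<Longrightarrow> vars_in (f i) S) \<Longrightarrow> vars_in (\<Sum>i\<in>I. f i :: 'a::comm_monoid_add mpoly) S"
  by (induction I rule: infinite_finite_induct) (simp_all add: vars_in_add)

lemma mpoly_induct_vars [consumes 1, case_names Const Var add mult]:
  fixes p :: "'a::comm_semiring_1 mpoly"
  assumes vars: "vars_in p V" and Const: "\<And>c. P (Const c)" and Var: "\<And>v. v \<in> V \<Longrightarrow> P (Var v)"
    and add: "\<And>p q. P p \<Longrightarrow> P q \<Longrightarrow> P (p + q)" and mult: "\<And>p q. P p \<Longrightarrow> P q \<Longrightarrow> P (p * q)"
  shows "P p"
proof -
  have P_1: "P 1" using Const[of 1] by (simp only: Const_1)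
  have P_power: "P (Var v ^ k)" if "v \<in> V" for v k
    by (induction k) (simp_all only: P_1 power_0 power_Suc mult Var that)
  have P_prod: "P (\<Prod>v\<in>T. Var v ^ h v)" if "T \<subseteq> V" for T h
    using that
    by (induction T rule: infinite_finite_induct) (simp_all add: P_1 P_power mult)
  have P_single: "P (Poly_Mapping.single m c)" if "Poly_Mapping.keys m \<subseteq> V" for m c
    by (simp only: single_eq_Const_mult_prod_Var mult Const P_prod that)
  have "P (\<Sum>m\<in>S. Poly_Mapping.single m (Poly_Mapping.lookup p m))"
    if "finite S" "S \<subseteq> Poly_Mapping.keys p" for S
    using that
  proof (induction S rule: finite_induct)
    case empty
    then show ?case using Const[of 0] by simp
  next
    case (insert m S)
    have "Poly_Mapping.keys m \<subseteq> V"
      using insert(4) vars unfolding vars_in_def by blast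
    then show ?case
      using insert by (simp add: add P_single)
  qed
  from this[of "Poly_Mapping.keys p"] show ?thesis
    by (simp only: poly_mapping_sum_single[symmetric] finite_keys subset_refl)
qed

definition pdiff_term :: "nat \<Rightarrow> (nat \<Rightarrow>\<^sub>0 nat) \<Rightarrow> 'a::comm_semiring_1 \<Rightarrow> 'a mpoly" where
  "pdiff_term i m c =
     Poly_Mapping.single (m - Poly_Mapping.single i 1) (of_nat (Poly_Mapping.lookup m i) * c)"

lemma pdiff_term_0: "pdiff_term i m 0 = 0"
  by (simp add: pdiff_term_def)

lemma pdiff_term_add: "pdiff_term i m (a + b) = pdiff_term i m a + pdiff_term i m b"
  by (simp add: pdiff_term_def distrib_left single_add)

lemma pdiff_eq_mpoly_extend: "pdiff i p = mpoly_extend (pdiff_term i) p"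
  by (simp add: pdiff_def mpoly_extend_def pdiff_term_def)

lemma pdiff_0 [simp]: "pdiff i 0 = 0"
  by (simp add: pdiff_eq_mpoly_extend)

lemma pdiff_single: "pdiff i (Poly_Mapping.single m c) = pdiff_term i m c"
  unfolding pdiff_eq_mpoly_extend by (rule mpoly_extend_single[of "pdiff_term i", OF pdiff_term_0])

lemma pdiff_add: "pdiff i (p + q) = pdiff i p + pdiff i q"
  unfolding pdiff_eq_mpoly_extend by (rule mpoly_extend_add[OF pdiff_term_0 pdiff_term_add])

lemma pdiff_sum: "pdiff i (\<Sum>k\<in>K. f k) = (\<Sum>k\<in>K. pdiff i (f k))"
  unfolding pdiff_eq_mpoly_extend by (rule mpoly_extend_sum[OF pdiff_term_0 pdiff_term_add])

lemma lookup_minus_single_add: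
  assumes "Poly_Mapping.lookup a i \<noteq> 0"
  shows "a - Poly_Mapping.single i 1 + b = a + b - Poly_Mapping.single i (1::nat)"
proof (rule poly_mapping_eqI)
  fix k
  show "Poly_Mapping.lookup (a - Poly_Mapping.single i 1 + b) k =
      Poly_Mapping.lookup (a + b - Poly_Mapping.single i 1) k"
    using assms by (cases "k = i") (simp_all add: lookup_add lookup_minus lookup_single)
qed

lemma pdiff_term_mult_single:
  "pdiff_term i a c * Poly_Mapping.single b d =
     Poly_Mapping.single (a + b - Poly_Mapping.single i 1) (of_nat (Poly_Mapping.lookup a i) * c * d)"
proof (cases "Poly_Mapping.lookup a i = 0")
  case False
  then show ?thesis
    unfolding pdiff_term_def mult_single lookup_minus_single_add[OF False] by (simp add: mult.assoc)
qed (simp add: pdiff_term_def)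

lemma pdiff_mult_single:
  fixes c d :: "'a::comm_semiring_1"
  shows "pdiff i (Poly_Mapping.single a c * Poly_Mapping.single b d) =
     pdiff i (Poly_Mapping.single a c) * Poly_Mapping.single b d +
     Poly_Mapping.single a c * pdiff i (Poly_Mapping.single b d)"
proof -
  have "pdiff i (Poly_Mapping.single a c) * Poly_Mapping.single b d +
      Poly_Mapping.single a c * pdiff i (Poly_Mapping.single b d) =
      Poly_Mapping.single (a + b - Poly_Mapping.single i 1)
        (of_nat (Poly_Mapping.lookup a i) * c * d + of_nat (Poly_Mapping.lookup b i) * d * c)"
    by (simp only: pdiff_single pdiff_term_mult_single mult.commute[of "Poly_Mapping.single a c"]
        add.commute[of b] single_add)
  also have "of_nat (Poly_Mapping.lookup a i) * c * d + of_nat (Poly_Mapping.lookup b i) * d * c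
      = of_nat (Poly_Mapping.lookup (a + b) i) * (c * d)"
    by (simp add: lookup_add algebra_simps)
  finally show ?thesis
    by (simp only: mult_single pdiff_single pdiff_term_def)
qed

lemma pdiff_mult: "pdiff i (p * q) = pdiff i p * q + p * pdiff i (q :: 'a::comm_semiring_1 mpoly)"
proof (induction p arbitrary: q rule: poly_mapping_induct_single)
  case (single m c)
  show ?case
    by (induction q rule: poly_mapping_induct_single)
      (simp_all only: pdiff_mult_single distrib_left pdiff_add add_ac mult_zero_right pdiff_0
        add_0_right)
qed (simp_all only: distrib_right pdiff_add add_ac mult_zero_left pdiff_0 add_0_right)

lemma pdiff_Const [simp]: "pdiff i (Const c) = 0"
  by (simp add: Const_def pdiff_single pdiff_term_def)

lemma pdiff_Var: "pdiff i (Var j) = (if i = j then 1 else (0::'a::comm_semiring_1 mpoly))"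
  by (simp add: Var_def pdiff_single pdiff_term_def lookup_single)

lemma pdiff_Var_mult: "pdiff i (Var j * p) = (if i = j then p else 0) + Var j * pdiff i p"
  by (simp add: pdiff_mult pdiff_Var)

lemma pdiff_eq_0_if_vars_in:
  assumes "vars_in p S" "i \<notin> S"
  shows "pdiff i p = 0"
  unfolding pdiff_def
proof (rule sum.neutral, rule ballI)
  fix m assume "m \<in> Poly_Mapping.keys p"
  then have "i \<notin> Poly_Mapping.keys m"
    using assms unfolding vars_in_def by blast
  then show "Poly_Mapping.single (m - Poly_Mapping.single i 1)
      (of_nat (Poly_Mapping.lookup m i) * Poly_Mapping.lookup p m) = 0"
    by (simp add: in_keys_iff)
qed

lemma vars_in_pdiff:
  assumes "vars_in p S"
  shows "vars_in (pdiff i p) S"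
  unfolding pdiff_def
proof (rule vars_in_sum)
  fix m assume "m \<in> Poly_Mapping.keys p"
  then have "Poly_Mapping.keys m \<subseteq> S"
    using assms unfolding vars_in_def by blast
  moreover have "Poly_Mapping.keys (m - x) \<subseteq> Poly_Mapping.keys m" for x
    by (auto simp: in_keys_iff lookup_minus)
  ultimately show "vars_in (Poly_Mapping.single (m - Poly_Mapping.single i 1)
      (of_nat (Poly_Mapping.lookup m i) * Poly_Mapping.lookup p m)) S"
    by (intro vars_in_single) blast
qed

lemma minus_single_add_single:
  assumes "Poly_Mapping.lookup x i \<noteq> 0"
  shows "x - Poly_Mapping.single i 1 + Poly_Mapping.single i (1::nat) = x"
  using lookup_minus_single_add[OF assms, of "Poly_Mapping.single i 1"] by simp

text \<open>Characteristic zero is needed: each term c z^m with m_i > 0 contributes m_i c \<noteq> 0 to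
  its own coefficient of the derivative, and distinct such terms do not interfere.\<close>
lemma lookup_eq_0_if_pdiff_eq_0:
  fixes p :: "'a::field_char_0 mpoly"
  assumes "pdiff i p = 0" "m \<in> Poly_Mapping.keys p"
  shows "Poly_Mapping.lookup m i = 0"
proof (rule ccontr)
  assume mi: "Poly_Mapping.lookup m i \<noteq> 0"
  let ?e = "Poly_Mapping.single i (1::nat)"
  let ?t = "\<lambda>m'. if m' - ?e = m - ?e then of_nat (Poly_Mapping.lookup m' i) * Poly_Mapping.lookup p m'
    else (0::'a)"
  have other: "?t m' = 0" if "m' \<in> Poly_Mapping.keys p - {m}" for m'
  proof (cases "Poly_Mapping.lookup m' i = 0")
    case False
    then have "m' - ?e \<noteq> m - ?e"
      using that minus_single_add_single[OF False] minus_single_add_single[OF mi] by force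
    then show ?thesis by simp
  qed simp
  have "Poly_Mapping.lookup (pdiff i p) (m - ?e) = (\<Sum>m'\<in>Poly_Mapping.keys p. ?t m')"
    unfolding pdiff_def lookup_sum by (intro sum.cong refl) (simp add: lookup_single when_def)
  also have "\<dots> = ?t m"
    using assms(2) other by (simp add: sum.remove)
  finally have "Poly_Mapping.lookup (pdiff i p) (m - ?e) =
      of_nat (Poly_Mapping.lookup m i) * Poly_Mapping.lookup p m"
    by simp
  then show False
    using assms mi by (simp add: in_keys_iff)
qed

lemma vars_in_Diff_if_pdiff_eq_0:
  fixes p :: "'a::field_char_0 mpoly"
  assumes "vars_in p S" "\<And>v. v \<in> T \<Longrightarrow> pdiff v p = 0"
  shows "vars_in p (S - T)"
  unfolding vars_in_def
proof (intro ballI subsetI DiffI)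
  fix m v assume m: "m \<in> Poly_Mapping.keys p" and v: "v \<in> Poly_Mapping.keys m"
  then show "v \<in> S"
    using assms(1) unfolding vars_in_def by blast
  show "v \<notin> T"
  proof
    assume "v \<in> T"
    then have "Poly_Mapping.lookup m v = 0"
      using lookup_eq_0_if_pdiff_eq_0[OF assms(2) m] by blast
    then show False
      using v by (simp add: in_keys_iff)
  qed
qed

definition subst_term :: "(nat \<Rightarrow> 'a::comm_semiring_1 mpoly) \<Rightarrow> (nat \<Rightarrow>\<^sub>0 nat) \<Rightarrow> 'a \<Rightarrow> 'a mpoly" where
  "subst_term s m c = Const c * (\<Prod>v\<in>Poly_Mapping.keys m. s v ^ Poly_Mapping.lookup m v)"

lemma subst_term_0: "subst_term s m 0 = 0"
  by (simp add: subst_term_def)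

lemma subst_term_add: "subst_term s m (a + b) = subst_term s m a + subst_term s m b"
  by (simp add: subst_term_def Const_add distrib_right)

lemma prod_keys_power_superset:
  assumes "finite T" "Poly_Mapping.keys m \<subseteq> T"
  shows "(\<Prod>v\<in>Poly_Mapping.keys m. (s v :: 'b::comm_monoid_mult) ^ Poly_Mapping.lookup m v) =
    (\<Prod>v\<in>T. s v ^ Poly_Mapping.lookup m v)"
  by (rule prod.mono_neutral_left) (use assms in \<open>auto simp: in_keys_iff\<close>)

lemma subst_term_mult: "subst_term s (a + b) (c * d) = subst_term s a c * subst_term s b d"
proof -
  let ?T = "Poly_Mapping.keys a \<union> Poly_Mapping.keys b"
  let ?pow = "\<lambda>m. \<Prod>v\<in>Poly_Mapping.keys m. s v ^ Poly_Mapping.lookup m v"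
  have "?pow (a + b) = (\<Prod>v\<in>?T. s v ^ Poly_Mapping.lookup (a + b) v)"
    by (rule prod_keys_power_superset) (simp_all add: keys_add)
  also have "\<dots> = (\<Prod>v\<in>?T. s v ^ Poly_Mapping.lookup a v) * (\<Prod>v\<in>?T. s v ^ Poly_Mapping.lookup b v)"
    by (simp add: lookup_add power_add prod.distrib)
  also have "\<dots> = ?pow a * ?pow b"
    by (subst (1 2) prod_keys_power_superset[of ?T]) auto
  finally show ?thesis
    unfolding subst_term_def Const_mult by (simp only: ac_simps)
qed

lemma subst_eq_mpoly_extend: "subst s p = mpoly_extend (subst_term s) p"
  by (simp add: subst_def mpoly_extend_def subst_term_def)

lemma subst_0 [simp]: "subst s 0 = 0"
  by (simp add: subst_eq_mpoly_extend)

lemma subst_single: "subst s (Poly_Mapping.single m c) = subst_term s m c"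
  unfolding subst_eq_mpoly_extend by (rule mpoly_extend_single[of "subst_term s", OF subst_term_0])

lemma subst_add: "subst s (p + q) = subst s p + subst s q"
  unfolding subst_eq_mpoly_extend by (rule mpoly_extend_add[OF subst_term_0 subst_term_add])

lemma subst_mult: "subst s (p * q) = subst s p * subst s q"
  unfolding subst_eq_mpoly_extend
  by (rule mpoly_extend_mult[OF subst_term_0 subst_term_add subst_term_mult])

lemma subst_sum: "subst s (\<Sum>k\<in>K. f k) = (\<Sum>k\<in>K. subst s (f k))"
  unfolding subst_eq_mpoly_extend by (rule mpoly_extend_sum[OF subst_term_0 subst_term_add])

lemma subst_Const [simp]: "subst s (Const c) = Const c"
  by (simp add: Const_def subst_single subst_term_def)

lemma subst_Var [simp]: "subst s (Var v) = s v"
  by (simp add: Var_def subst_single subst_term_def)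

lemma subst_1 [simp]: "subst s 1 = 1"
  using subst_Const[of s 1] by (simp only: Const_1)

interpretation subst: comm_ring_hom "subst s :: 'a::comm_ring_1 mpoly \<Rightarrow> 'a mpoly" for s
  by unfold_locales (simp_all add: subst_add subst_mult)

lemma subst_Var_eq: "subst Var p = (p :: 'a::comm_semiring_1 mpoly)"
proof -
  have "subst Var p = mpoly_extend Poly_Mapping.single p"
    unfolding subst_def mpoly_extend_def
    by (intro sum.cong refl) (simp only: single_eq_Const_mult_prod_Var[symmetric])
  then show ?thesis
    by (simp only: mpoly_extend_single_id)
qed

lemma subst_cong:
  assumes "vars_in p S" "\<And>v. v \<in> S \<Longrightarrow> s v = t v"
  shows "subst s p = subst t p"
  unfolding subst_def
proof (intro sum.cong refl arg_cong2[where f = "(*)"] prod.cong)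
  fix m v assume "m \<in> Poly_Mapping.keys p" "v \<in> Poly_Mapping.keys m"
  then have "v \<in> S" using assms(1) unfolding vars_in_def by blast
  then show "s v ^ Poly_Mapping.lookup m v = t v ^ Poly_Mapping.lookup m v" using assms(2) by simp
qed

lemma subst_eq_self:
  assumes "vars_in p S" "\<And>v. v \<in> S \<Longrightarrow> s v = Var v"
  shows "subst s p = (p :: 'a::comm_semiring_1 mpoly)"
  using subst_cong[OF assms] by (simp only: subst_Var_eq)

lemma subst_subst: "subst s (subst t p) = subst (\<lambda>v. subst s (t v)) (p :: 'a::comm_semiring_1 mpoly)"
  using vars_in_UNIV[of p]
  by (induction p rule: mpoly_induct_vars) (simp_all add: subst_add subst_mult)

lemma vars_in_subst:
  assumes "vars_in p T" "\<And>v. v \<in> T \<Longrightarrow> vars_in (s v) S"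
  shows "vars_in (subst s (p :: 'a::comm_semiring_1 mpoly)) S"
  using assms(1)
  by (induction p rule: mpoly_induct_vars) (simp_all add: assms(2) subst_add subst_mult vars_in_add vars_in_mult)

lemma pdiff_subst:
  fixes s :: "nat \<Rightarrow> 'a::comm_semiring_1 mpoly"
  assumes "vars_in p V" "finite V"
  shows "pdiff j (subst s p) = (\<Sum>v\<in>V. subst s (pdiff v p) * pdiff j (s v))"
  using assms(1)
proof (induction p rule: mpoly_induct_vars)
  case (Var w)
  have "(\<Sum>v\<in>V. subst s (pdiff v (Var w)) * pdiff j (s v)) = (\<Sum>v\<in>V. if v = w then pdiff j (s v) else 0)"
    by (intro sum.cong refl) (simp add: pdiff_Var)
  then show ?case
    using Var assms(2) by simp
next
  case (mult p q)
  then show ?case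
    by (simp add: subst_add subst_mult pdiff_mult sum_distrib_left sum_distrib_right sum.distrib
        algebra_simps)
qed (simp_all add: subst_add pdiff_add distrib_right sum.distrib)

text \<open>\<open>grading S p\<close> is the univariate polynomial whose coefficients are the components of p
  that are homogeneous in the variables S, so its degree is the total degree of p in S.\<close>

definition deg_in :: "nat set \<Rightarrow> (nat \<Rightarrow>\<^sub>0 nat) \<Rightarrow> nat" where
  "deg_in S m = (\<Sum>v\<in>Poly_Mapping.keys m \<inter> S. Poly_Mapping.lookup m v)"

lemma deg_in_superset:
  assumes "finite T" "Poly_Mapping.keys m \<inter> S \<subseteq> T" "T \<subseteq> S"
  shows "deg_in S m = (\<Sum>v\<in>T. Poly_Mapping.lookup m v)"
  unfolding deg_in_def by (rule sum.mono_neutral_left) (use assms in \<open>auto simp: in_keys_iff\<close>)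

lemma deg_in_add: "deg_in S (a + b) = deg_in S a + deg_in S b"
proof -
  let ?T = "(Poly_Mapping.keys a \<union> Poly_Mapping.keys b) \<inter> S"
  have "deg_in S (a + b) = (\<Sum>v\<in>?T. Poly_Mapping.lookup (a + b) v)"
    by (rule deg_in_superset) (use keys_add[of a b] in auto)
  also have "\<dots> = (\<Sum>v\<in>?T. Poly_Mapping.lookup a v) + (\<Sum>v\<in>?T. Poly_Mapping.lookup b v)"
    by (simp add: lookup_add sum.distrib)
  also have "\<dots> = deg_in S a + deg_in S b"
    by (subst (1 2) deg_in_superset[of ?T]) auto
  finally show ?thesis .
qed

lemma deg_in_eq_0_iff: "deg_in S m = 0 \<longleftrightarrow> Poly_Mapping.keys m \<inter> S = {}"
  unfolding deg_in_def by (auto simp: in_keys_iff)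

definition grading_term :: "nat set \<Rightarrow> (nat \<Rightarrow>\<^sub>0 nat) \<Rightarrow> 'a::comm_semiring_1 \<Rightarrow> 'a mpoly poly" where
  "grading_term S m c = monom (Poly_Mapping.single m c) (deg_in S m)"

definition grading :: "nat set \<Rightarrow> 'a::comm_semiring_1 mpoly \<Rightarrow> 'a mpoly poly" where
  "grading S p = mpoly_extend (grading_term S) p"

lemma grading_term_0: "grading_term S m 0 = 0"
  by (simp add: grading_term_def)

lemma grading_term_add: "grading_term S m (a + b) = grading_term S m a + grading_term S m b"
  by (simp add: grading_term_def add_monom single_add)

lemma grading_term_mult: "grading_term S (a + b) (c * d) = grading_term S a c * grading_term S b d"
  by (simp add: grading_term_def mult_monom mult_single deg_in_add)

lemma grading_0 [simp]: "grading S 0 = 0"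
  by (simp add: grading_def)

lemma grading_single: "grading S (Poly_Mapping.single m c) = grading_term S m c"
  unfolding grading_def by (rule mpoly_extend_single[of "grading_term S", OF grading_term_0])

lemma grading_add: "grading S (p + q) = grading S p + grading S q"
  unfolding grading_def by (rule mpoly_extend_add[OF grading_term_0 grading_term_add])

lemma grading_mult: "grading S (p * q) = grading S p * grading S q"
  unfolding grading_def by (rule mpoly_extend_mult[OF grading_term_0 grading_term_add grading_term_mult])

lemma grading_sum: "grading S (\<Sum>k\<in>K. f k) = (\<Sum>k\<in>K. grading S (f k))"
  unfolding grading_def by (rule mpoly_extend_sum[OF grading_term_0 grading_term_add])

lemma poly_grading_1: "poly (grading S p) 1 = p"
  by (induction p rule: poly_mapping_induct_single)
    (simp_all add: grading_add grading_single grading_term_def poly_monom)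

lemma grading_eq_0_iff [simp]: "grading S p = 0 \<longleftrightarrow> p = 0"
  using poly_grading_1[of S p] by auto

lemma vars_in_coeff_grading_0: "vars_in (coeff (grading S p) 0) (- S)"
proof (induction p rule: poly_mapping_induct_single)
  case (single m c)
  show ?case
  proof (cases "deg_in S m = 0")
    case True
    then have "Poly_Mapping.keys m \<subseteq> - S"
      using deg_in_eq_0_iff by blast
    then show ?thesis
      using True by (simp add: grading_single grading_term_def coeff_monom vars_in_single)
  qed (simp add: grading_single grading_term_def coeff_monom)
qed (simp_all add: grading_add vars_in_add)

lemma vars_in_if_degree_grading_eq_0:
  assumes "degree (grading S p) = 0"
  shows "vars_in p (- S)"
proof -
  have "p = poly [:coeff (grading S p) 0:] 1"
    using degree_0_id[OF assms] poly_grading_1[of S p] by simp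
  then show ?thesis
    using vars_in_coeff_grading_0[of S p] by simp
qed

lemma grading_if_vars_in:
  assumes "vars_in p (- S)"
  shows "grading S p = [:p:]"
proof -
  have "grading S p = (\<Sum>m\<in>Poly_Mapping.keys p. [:Poly_Mapping.single m (Poly_Mapping.lookup p m):])"
    unfolding grading_def mpoly_extend_def
  proof (intro sum.cong refl)
    fix m assume "m \<in> Poly_Mapping.keys p"
    then have "deg_in S m = 0"
      using assms deg_in_eq_0_iff unfolding vars_in_def by blast
    then show "grading_term S m (Poly_Mapping.lookup p m) = [:Poly_Mapping.single m (Poly_Mapping.lookup p m):]"
      by (simp add: grading_term_def monom_0)
  qed
  also have "\<dots> = [:p:]"
    by (subst (2) poly_mapping_sum_single) (simp only: sum_to_poly)
  finally show ?thesis .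
qed

lemma grading_Var: "v \<in> S \<Longrightarrow> grading S (Var v) = monom (Var v) 1"
  by (simp add: Var_def grading_single grading_term_def deg_in_def)

lemma grading_1 [simp]: "grading S 1 = 1"
  using grading_single[of S 0 1] by (simp add: grading_term_def deg_in_def)

lemma degree_grading_unit:
  fixes p :: "'a::idom mpoly"
  assumes "p dvd 1"
  shows "degree (grading S p) = 0"
proof -
  obtain q where q: "1 = p * q"
    using assms by (elim dvdE)
  then have "p \<noteq> 0" "q \<noteq> 0"
    by auto
  moreover have "grading S p * grading S q = 1"
    using q by (metis grading_1 grading_mult)
  ultimately show ?thesis
    using degree_mult_eq[of "grading S p" "grading S q"] by simp
qed

lemma Const_if_dvd_1:
  fixes p :: "'a::idom mpoly"
  assumes "p dvd 1"
  shows "\<exists>c. c \<noteq> 0 \<and> p = Const c"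
proof -
  have "vars_in p {}"
    using vars_in_if_degree_grading_eq_0[OF degree_grading_unit[OF assms, of UNIV]] by simp
  then have keys: "Poly_Mapping.keys p \<subseteq> {0}"
    unfolding vars_in_def by auto
  have "p = (\<Sum>m\<in>Poly_Mapping.keys p. Poly_Mapping.single m (Poly_Mapping.lookup p m))"
    by (rule poly_mapping_sum_single)
  also have "\<dots> = (\<Sum>m\<in>{0}. Poly_Mapping.single m (Poly_Mapping.lookup p m))"
    by (rule sum.mono_neutral_left) (use keys in \<open>auto simp: in_keys_iff\<close>)
  finally have "p = Const (Poly_Mapping.lookup p 0)"
    by (simp add: Const_def)
  moreover have "p \<noteq> 0"
    using assms by auto
  ultimately show ?thesis
    by (metis Const_0)
qed

text \<open>A polynomial of degree one in the variables S is irreducible unless its derivatives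
  with respect to S share a non-unit factor free of S: a factorisation splits the degree as
  1 + 0, and a factor of degree 0 is constant for every \<open>\<partial>/\<partial>z\<^sub>v\<close>, v \<in> S.\<close>
lemma irreducible_if_degree_grading_eq_1:
  fixes p :: "'a::idom mpoly"
  assumes degree_p: "degree (grading S p) = 1"
    and coprime: "\<And>q. vars_in q (- S) \<Longrightarrow> (\<forall>v\<in>S. q dvd pdiff v p) \<Longrightarrow> q dvd 1"
  shows "irreducible p"
proof -
  have factor_unit: "q dvd 1" if "degree (grading S q) = 0" "p = q * r" for q r
  proof (rule coprime)
    show "vars_in q (- S)"
      using vars_in_if_degree_grading_eq_0[OF that(1)] .
    then show "\<forall>v\<in>S. q dvd pdiff v p"
      using that(2) by (auto simp: pdiff_mult pdiff_eq_0_if_vars_in)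
  qed
  have "p \<noteq> 0"
    using degree_p by auto
  moreover have "\<not> p dvd 1"
    using degree_grading_unit[of p S] degree_p by auto
  moreover have "q dvd 1 \<or> r dvd 1" if "p = q * r" for q r
  proof -
    have "q \<noteq> 0" "r \<noteq> 0"
      using \<open>p \<noteq> 0\<close> that by auto
    then have "degree (grading S q) + degree (grading S r) = 1"
      using degree_mult_eq[of "grading S q" "grading S r"] degree_p that by (simp add: grading_mult)
    then have "degree (grading S q) = 0 \<or> degree (grading S r) = 0"
      by arith
    then show ?thesis
      using factor_unit[of q r] factor_unit[of r q] that by (auto simp: mult.commute)
  qed
  ultimately show ?thesis
    unfolding irreducible_def by blast
qed

lemma grading_affine:
  assumes "vars_in a (- S)" "\<And>k. k \<in> K \<Longrightarrow> vars_in (c k) (- S)" "\<And>k. k \<in> K \<Longrightarrow> v k \<in> S"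
  shows "grading S (a + (\<Sum>k\<in>K. Var (v k) * c k)) = pCons a [:\<Sum>k\<in>K. Var (v k) * c k:]"
proof -
  have "grading S (Var (v k) * c k) = monom (Var (v k) * c k) 1" if "k \<in> K" for k
  proof -
    have "grading S (Var (v k) * c k) = monom (Var (v k)) 1 * monom (c k) 0"
      using assms that by (simp add: grading_mult grading_if_vars_in grading_Var monom_0)
    then show ?thesis
      by (simp only: mult_monom add_0_right)
  qed
  then have "grading S (a + (\<Sum>k\<in>K. Var (v k) * c k)) = [:a:] + (\<Sum>k\<in>K. monom (Var (v k) * c k) 1)"
    using assms by (simp add: grading_add grading_sum grading_if_vars_in)
  also have "\<dots> = [:a:] + monom (\<Sum>k\<in>K. Var (v k) * c k) 1"
    by (simp only: monom_sum)
  also have "monom (\<Sum>k\<in>K. Var (v k) * c k) 1 = pCons 0 [:\<Sum>k\<in>K. Var (v k) * c k:]"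
    by (simp add: monom_Suc monom_0)
  also have "[:a:] + \<dots> = pCons a [:\<Sum>k\<in>K. Var (v k) * c k:]"
    by simp
  finally show ?thesis .
qed

lemma mat_mult_entry:
  assumes "A \<in> carrier_mat n n" "B \<in> carrier_mat n n" "i < n" "j < n"
  shows "(A * B) $$ (i, j) = (\<Sum>k<n. A $$ (i, k) * B $$ (k, j))"
  using assms by (simp add: scalar_prod_def atLeast0LessThan)

lemma adj_mat_mult_sum:
  fixes A :: "'a::comm_ring_1 mat"
  assumes A: "A \<in> carrier_mat n n" and j: "j < n"
  shows "(\<Sum>k<n. adj_mat A $$ (j, k) * (\<Sum>l<n. A $$ (k, l) * w l)) = det A * w j"
proof -
  have adj: "adj_mat A \<in> carrier_mat n n" "adj_mat A * A = det A \<cdot>\<^sub>m 1\<^sub>m n"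
    using adj_mat[OF A] by auto
  have "(\<Sum>k<n. adj_mat A $$ (j, k) * (\<Sum>l<n. A $$ (k, l) * w l)) =
      (\<Sum>l<n. (\<Sum>k<n. adj_mat A $$ (j, k) * A $$ (k, l)) * w l)"
    by (simp only: sum_distrib_left sum_distrib_right mult.assoc) (rule sum.swap)
  also have "\<dots> = (\<Sum>l<n. if j = l then det A * w l else 0)"
  proof (intro sum.cong refl)
    fix l assume "l \<in> {..<n}"
    then have "(adj_mat A * A) $$ (j, l) = (if j = l then det A else 0)"
      using adj(2) j by simp
    with mat_mult_entry[OF adj(1) A j, of l]
    have "(\<Sum>k<n. adj_mat A $$ (j, k) * A $$ (k, l)) = (if j = l then det A else 0)"
      using \<open>l \<in> {..<n}\<close> by simp
    then show "(\<Sum>k<n. adj_mat A $$ (j, k) * A $$ (k, l)) * w l = (if j = l then det A * w l else 0)"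
      by simp
  qed
  also have "\<dots> = det A * w j"
    using j by simp
  finally show ?thesis .
qed

lemma jac_carrier: "jac N P \<in> carrier_mat N N"
  by (simp add: jac_def)

lemma jac_index: "i < N \<Longrightarrow> j < N \<Longrightarrow> jac N P $$ (i, j) = pdiff j (P i)"
  by (simp add: jac_def)

text \<open>The chain rule applied to Q \<circ> P = id shows that the Jacobian matrix of P is invertible,
  so its determinant is a unit, i.e. a nonzero constant.\<close>
lemma keller_if_poly_map_invertible:
  fixes P :: "nat \<Rightarrow> 'a::idom mpoly"
  assumes "poly_map_invertible N P"
  shows "keller N P"
proof -
  obtain Q where Q_vars: "\<forall>i<N. vars_in (Q i) {..<N}" and QP: "\<forall>i<N. subst P (Q i) = Var i"
    using assms unfolding poly_map_invertible_def by blast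
  define A where "A = mat N N (\<lambda>(i, v). subst P (pdiff v (Q i)))"
  have A: "A \<in> carrier_mat N N"
    unfolding A_def by simp
  have "A * jac N P = 1\<^sub>m N"
  proof (rule eq_matI)
    fix i j assume "i < dim_row (1\<^sub>m N :: 'a mpoly mat)" "j < dim_col (1\<^sub>m N :: 'a mpoly mat)"
    then have ij: "i < N" "j < N"
      by auto
    have "(A * jac N P) $$ (i, j) = (\<Sum>v<N. subst P (pdiff v (Q i)) * pdiff j (P v))"
      unfolding mat_mult_entry[OF A jac_carrier ij]
      by (intro sum.cong refl) (simp add: A_def jac_index ij)
    also have "\<dots> = pdiff j (subst P (Q i))"
      by (rule pdiff_subst[symmetric]) (use Q_vars ij in auto)
    finally show "(A * jac N P) $$ (i, j) = 1\<^sub>m N $$ (i, j)"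
      using QP ij by (simp add: pdiff_Var)
  qed (use A in \<open>auto simp: jac_def\<close>)
  then have "det A * det (jac N P) = 1"
    using det_mult[OF A jac_carrier, of P] by simp
  then have "det (jac N P) dvd 1"
    by (metis dvdI mult.commute)
  then show ?thesis
    unfolding keller_def using Const_if_dvd_1 by blast
qed

text \<open>The inverse of the Jacobian matrix is 1/d times its adjugate. Its entries are
  polynomials in the entries of the Jacobian matrix, hence lie in K[z_0..z_(n-1)]; rather
  than proving this about the adjugate, we kill the remaining variables by a substitution
  that fixes the Jacobian matrix.\<close>
lemma polynomial_inverse_jac:
  fixes F :: "nat \<Rightarrow> 'a::field mpoly"
  assumes F_vars: "\<forall>i<n. vars_in (F i) {..<n}" and det: "det (jac n F) = Const d" "d \<noteq> 0"
  obtains N where "\<And>k i. vars_in (N k i) {..<n}"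
    "\<And>k l. k < n \<Longrightarrow> l < n \<Longrightarrow> (\<Sum>i<n. N k i * pdiff l (F i)) = (if k = l then 1 else 0)"
    "\<And>k l. k < n \<Longrightarrow> l < n \<Longrightarrow> (\<Sum>i<n. pdiff i (F l) * N i k) = (if l = k then 1 else 0)"
proof -
  let ?J = "jac n F"
  let ?B = "adj_mat ?J"
  define \<tau> where "\<tau> = (\<lambda>k. if k < n then Var k else (0::'a mpoly))"
  define N where "N = (\<lambda>k i. subst \<tau> (Const (inverse d) * ?B $$ (k, i)))"
  have B: "?B \<in> carrier_mat n n" "?B * ?J = det ?J \<cdot>\<^sub>m 1\<^sub>m n" "?J * ?B = det ?J \<cdot>\<^sub>m 1\<^sub>m n"
    using adj_mat[OF jac_carrier] by auto
  have subst_jac: "subst \<tau> (pdiff l (F i)) = pdiff l (F i)" if "i < n" for i l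
    by (rule subst_eq_self[OF vars_in_pdiff]) (use F_vars that in \<open>auto simp: \<tau>_def\<close>)
  have inverse_d: "Const (inverse d) * Const d = (1::'a mpoly)"
    using det(2) by (simp add: Const_mult[symmetric])
  have "vars_in (N k i) {..<n}" for k i
    unfolding N_def by (rule vars_in_subst[OF vars_in_UNIV]) (simp add: \<tau>_def vars_in_Var)
  moreover have "(\<Sum>i<n. N k i * pdiff l (F i)) = (if k = l then 1 else 0)" if "k < n" "l < n" for k l
  proof -
    have "(\<Sum>i<n. N k i * pdiff l (F i)) =
        subst \<tau> (\<Sum>i<n. Const (inverse d) * ?B $$ (k, i) * ?J $$ (i, l))"
      unfolding N_def subst_sum subst_mult using that
      by (intro sum.cong refl) (simp add: subst_jac jac_index)
    also have "\<dots> = subst \<tau> (Const (inverse d) * (?B * ?J) $$ (k, l))"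
      using that by (simp add: mat_mult_entry[OF B(1) jac_carrier] sum_distrib_left mult.assoc)
    finally show ?thesis
      using that inverse_d det by (simp add: B(2))
  qed
  moreover have "(\<Sum>i<n. pdiff i (F l) * N i k) = (if l = k then 1 else 0)" if "k < n" "l < n" for k l
  proof -
    have "(\<Sum>i<n. pdiff i (F l) * N i k) =
        subst \<tau> (\<Sum>i<n. Const (inverse d) * (?J $$ (l, i) * ?B $$ (i, k)))"
      unfolding N_def subst_sum subst_mult using that
      by (intro sum.cong refl) (simp add: subst_jac jac_index ac_simps)
    also have "\<dots> = subst \<tau> (Const (inverse d) * (?J * ?B) $$ (l, k))"
      using that by (simp add: mat_mult_entry[OF jac_carrier B(1)] sum_distrib_left)
    finally show ?thesis
      using that inverse_d det by (simp add: B(3))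
  qed
  ultimately show ?thesis
    using that by blast
qed

lemma power_minus_one_mult_self: "(-1::'b::ring_1) ^ (n * n) = (-1) ^ n"
  by (cases "even n") (simp_all add: neg_one_even_power neg_one_odd_power)

lemma sum_lessThan_add: "(\<Sum>i<(a::nat) + b. g i) = (\<Sum>i<a. g i) + (\<Sum>i<b. g (a + i))"
  by (induction b) (simp_all add: add_ac)

text \<open>Variables z_0..z_(n-1) are x and z_n..z_(2n-1) are y, so that G = (\<nabla>f + J(F)^T y, F).\<close>
locale gradient_map =
  fixes n :: nat and F :: "nat \<Rightarrow> 'a::field_char_0 mpoly" and f :: "'a mpoly" and G :: "nat \<Rightarrow> 'a mpoly"
  assumes F_vars: "\<forall>i<n. vars_in (F i) {..<n}"
    and f_vars: "vars_in f {..<n}"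
    and G_def: "\<forall>j<2*n. G j = pdiff j (f + (\<Sum>i<n. Var (n + i) * F i))"
begin

lemma vars_in_pdiff_F: "i < n \<Longrightarrow> vars_in (pdiff j (F i)) {..<n}"
  using F_vars vars_in_pdiff by blast

lemma pdiff_y_eq_0: "vars_in q {..<n} \<Longrightarrow> pdiff (n + k) q = 0"
  by (rule pdiff_eq_0_if_vars_in) auto

lemma G_x: "j < n \<Longrightarrow> G j = pdiff j f + (\<Sum>i<n. Var (n + i) * pdiff j (F i))"
  using G_def by (simp add: pdiff_add pdiff_sum pdiff_Var_mult)

lemma G_y: "k < n \<Longrightarrow> G (n + k) = F k"
proof -
  assume k: "k < n"
  have "G (n + k) = (\<Sum>i<n. if i = k then F i else 0)"
    using G_def k F_vars f_vars by (simp add: pdiff_add pdiff_sum pdiff_Var_mult pdiff_y_eq_0)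
  then show ?thesis
    using k by simp
qed

lemma pdiff_y_G_x: "j < n \<Longrightarrow> l < n \<Longrightarrow> pdiff (n + l) (G j) = pdiff j (F l)"
proof -
  assume j: "j < n" and l: "l < n"
  have "pdiff (n + l) (G j) = (\<Sum>i<n. if i = l then pdiff j (F i) else 0)"
    using j f_vars
    by (simp add: G_x pdiff_add pdiff_sum pdiff_Var_mult pdiff_y_eq_0 vars_in_pdiff
        vars_in_pdiff_F)
  then show ?thesis
    using l by simp
qed

lemma pdiff_y_G_y: "i < n \<Longrightarrow> pdiff (n + l) (G (n + i)) = 0"
  using F_vars by (simp add: G_y pdiff_y_eq_0)

lemma jac_G_swap_rows:
  "mat (n + n) (n + n) (\<lambda>(i, j). jac (n + n) G $$ (if i < n then i + n else i - n, j)) =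
    four_block_mat (jac n F) (0\<^sub>m n n) (mat n n (\<lambda>(i, j). pdiff j (G i))) (transpose_mat (jac n F))"
    (is "?B = ?blocks")
proof (rule eq_matI)
  fix i j assume "i < dim_row ?blocks" "j < dim_col ?blocks"
  then have ij: "i < n + n" "j < n + n"
    by (simp_all add: jac_def)
  consider (xx) "i < n" "j < n" | (xy) l where "i < n" "j = n + l" "l < n"
    | (yx) k where "i = n + k" "k < n" "j < n" | (yy) k l where "i = n + k" "k < n" "j = n + l" "l < n"
    using ij by (metis add_less_cancel_left le_Suc_ex not_less)
  then show "?B $$ (i, j) = ?blocks $$ (i, j)"
  proof cases
    case xx
    then show ?thesis using G_y[of i] by (simp add: jac_def add.commute)
  next
    case xy
    then show ?thesis using pdiff_y_G_y[of i l] by (simp add: jac_def add.commute)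
  next
    case yx
    then show ?thesis by (simp add: jac_def)
  next
    case yy
    then show ?thesis by (simp add: jac_def pdiff_y_G_x)
  qed
qed (simp_all add: jac_def)

lemma det_jac_G: "det (jac (2*n) G) = (-1)^n * (det (jac n F))^2"
proof -
  let ?J = "jac n F"
  have "det (jac (n + n) G) =
      (-1)^(n*n) * det (mat (n + n) (n + n) (\<lambda>(i, j). jac (n + n) G $$ (if i < n then i + n else i - n, j)))"
    by (rule det_swap_rows[OF jac_carrier])
  also have "\<dots> = (-1)^n * (det ?J * det (transpose_mat ?J))"
    unfolding jac_G_swap_rows power_minus_one_mult_self
    by (subst det_four_block_mat_upper_right_zero[OF jac_carrier refl]) (simp_all add: jac_def)
  finally show ?thesis
    by (simp add: mult_2 det_transpose[OF jac_carrier] power2_eq_square)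
qed

lemma det_jac_F_neq_0_if_keller_G:
  assumes "keller (2*n) G"
  shows "det (jac n F) \<noteq> 0"
  using assms det_jac_G unfolding keller_def by fastforce


definition G_combination :: "(nat \<Rightarrow> 'a) \<Rightarrow> 'a mpoly" where
  "G_combination \<mu> = (\<Sum>i<2*n. Const (\<mu> i) * G i) + Const (\<mu> (2*n))"

definition y_coeff :: "(nat \<Rightarrow> 'a) \<Rightarrow> nat \<Rightarrow> 'a mpoly" where
  "y_coeff \<mu> k = (\<Sum>j<n. Const (\<mu> j) * pdiff j (F k))"

definition y_free_part :: "(nat \<Rightarrow> 'a) \<Rightarrow> 'a mpoly" where
  "y_free_part \<mu> =
     (\<Sum>j<n. Const (\<mu> j) * pdiff j f) + (\<Sum>i<n. Const (\<mu> (n + i)) * F i) + Const (\<mu> (2*n))"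

lemma vars_in_y_coeff: "k < n \<Longrightarrow> vars_in (y_coeff \<mu> k) {..<n}"
  unfolding y_coeff_def by (intro vars_in_sum vars_in_mult vars_in_Const vars_in_pdiff_F)

lemma vars_in_y_free_part: "vars_in (y_free_part \<mu>) {..<n}"
  unfolding y_free_part_def using F_vars
  by (intro vars_in_add vars_in_sum vars_in_mult vars_in_Const vars_in_pdiff f_vars) auto

lemma G_combination_eq: "G_combination \<mu> = y_free_part \<mu> + (\<Sum>k<n. Var (n + k) * y_coeff \<mu> k)"
proof -
  have "(\<Sum>i<2*n. Const (\<mu> i) * G i) =
      (\<Sum>j<n. Const (\<mu> j) * G j) + (\<Sum>i<n. Const (\<mu> (n + i)) * F i)"
    by (simp add: mult_2 sum_lessThan_add G_y)
  also have "(\<Sum>j<n. Const (\<mu> j) * G j) =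
      (\<Sum>j<n. Const (\<mu> j) * pdiff j f) + (\<Sum>j<n. \<Sum>k<n. Var (n + k) * (Const (\<mu> j) * pdiff j (F k)))"
    by (simp add: G_x distrib_left sum_distrib_left mult.left_commute sum.distrib)
  also have "(\<Sum>j<n. \<Sum>k<n. Var (n + k) * (Const (\<mu> j) * pdiff j (F k))) =
      (\<Sum>k<n. Var (n + k) * y_coeff \<mu> k)"
    unfolding y_coeff_def sum_distrib_left by (rule sum.swap)
  finally show ?thesis
    unfolding G_combination_def y_free_part_def by (simp only: add_ac)
qed

lemma pdiff_y_G_combination: "k < n \<Longrightarrow> pdiff (n + k) (G_combination \<mu>) = y_coeff \<mu> k"
  unfolding G_combination_eq
  by (simp add: pdiff_add pdiff_sum pdiff_Var_mult pdiff_y_eq_0 vars_in_y_free_part vars_in_y_coeff)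

text \<open>For a Keller map the y-coefficients generate the unit ideal: applying the adjugate of
  J(F) to them gives det J(F) \<mu>_j, a nonzero constant.\<close>
lemma dvd_1_if_dvd_y_coeff:
  assumes "keller n F" "j < n" "\<mu> j \<noteq> 0" "\<forall>k<n. q dvd y_coeff \<mu> k"
  shows "q dvd 1"
proof -
  obtain d where d: "d \<noteq> 0" "det (jac n F) = Const d"
    using assms(1) unfolding keller_def by blast
  have "(\<Sum>k<n. adj_mat (jac n F) $$ (j, k) * y_coeff \<mu> k) =
      (\<Sum>k<n. adj_mat (jac n F) $$ (j, k) * (\<Sum>l<n. jac n F $$ (k, l) * Const (\<mu> l)))"
    unfolding y_coeff_def by (intro sum.cong refl) (simp add: jac_index mult.commute)
  also have "\<dots> = Const (d * \<mu> j)"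
    unfolding adj_mat_mult_sum[OF jac_carrier assms(2)] d(2) by (rule Const_mult[symmetric])
  finally have "q dvd Const (d * \<mu> j)"
    using assms(4) by (metis (no_types, lifting) dvd_mult dvd_sum lessThan_iff)
  moreover have "Const (d * \<mu> j) dvd 1"
    using d(1) assms(3) by (intro Const_dvd_1) simp
  ultimately show ?thesis
    by (rule dvd_trans)
qed

lemma irreducible_G_combination:
  assumes "keller n F" "j < n" "\<mu> j \<noteq> 0"
  shows "irreducible (G_combination \<mu>)"
proof (rule irreducible_if_degree_grading_eq_1[where S = "{n..}"])
  let ?Y = "\<Sum>k<n. Var (n + k) * y_coeff \<mu> k"
  have "?Y \<noteq> 0"
  proof
    assume Y: "?Y = 0"
    have "y_coeff \<mu> k = 0" if "k < n" for k
    proof -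
      have "y_coeff \<mu> k = pdiff (n + k) (y_free_part \<mu> + ?Y)"
        using pdiff_y_G_combination[OF that] by (simp only: G_combination_eq)
      also have "\<dots> = 0"
        by (simp add: Y pdiff_y_eq_0 vars_in_y_free_part)
      finally show ?thesis .
    qed
    then show False
      using dvd_1_if_dvd_y_coeff[where j = j and \<mu> = \<mu> and q = 0, OF assms] by simp
  qed
  moreover have "grading {n..} (G_combination \<mu>) = pCons (y_free_part \<mu>) [:?Y:]"
    unfolding G_combination_eq
    by (rule grading_affine) (auto simp: vars_in_y_free_part vars_in_y_coeff)
  ultimately show "degree (grading {n..} (G_combination \<mu>)) = 1"
    by simp
next
  fix q assume "vars_in q (- {n..})" and dvd: "\<forall>v\<in>{n..}. q dvd pdiff v (G_combination \<mu>)"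
  have "q dvd y_coeff \<mu> k" if "k < n" for k
    using dvd[rule_format, of "n + k"] by (simp add: pdiff_y_G_combination that)
  then show "q dvd 1"
    using dvd_1_if_dvd_y_coeff[where j = j and \<mu> = \<mu> and q = q, OF assms] by blast
qed


definition Q_at_y :: "(nat \<Rightarrow> 'a mpoly) \<Rightarrow> nat \<Rightarrow> 'a mpoly" where
  "Q_at_y Q k = subst (\<lambda>v. if v < n then Var (n + v) else 0) (Q k)"

text \<open>If Q inverts F and N inverts J(F), then G(x, y) = (u, v) is solved by x = Q(v) and
  y = N(x)^T (u - \<nabla>f(x)).\<close>
definition G_inverse :: "(nat \<Rightarrow> 'a mpoly) \<Rightarrow> (nat \<Rightarrow> nat \<Rightarrow> 'a mpoly) \<Rightarrow> nat \<Rightarrow> 'a mpoly" where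
  "G_inverse Q N j =
     (if j < n then Q_at_y Q j
      else (\<Sum>k<n. subst (Q_at_y Q) (N k (j - n)) * (Var k - subst (Q_at_y Q) (pdiff k f))))"

lemma G_inverse_y:
  "G_inverse Q N (n + i) = (\<Sum>k<n. subst (Q_at_y Q) (N k i) * (Var k - subst (Q_at_y Q) (pdiff k f)))"
  by (simp add: G_inverse_def)

context
  fixes Q :: "nat \<Rightarrow> 'a mpoly" and N :: "nat \<Rightarrow> nat \<Rightarrow> 'a mpoly"
  assumes Q_vars: "\<forall>i<n. vars_in (Q i) {..<n}"
    and QF: "\<forall>i<n. subst Q (F i) = Var i"
    and FQ: "\<forall>i<n. subst F (Q i) = Var i"
    and N_vars: "\<And>k i. vars_in (N k i) {..<n}"
    and N_left: "\<And>k l. k < n \<Longrightarrow> l < n \<Longrightarrow> (\<Sum>i<n. N k i * pdiff l (F i)) = (if k = l then 1 else 0)"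
    and N_right: "\<And>k l. k < n \<Longrightarrow> l < n \<Longrightarrow> (\<Sum>i<n. pdiff i (F l) * N i k) = (if l = k then 1 else 0)"
begin

lemma vars_in_Q_at_y: "vars_in (Q_at_y Q k) {n..<2*n}"
  unfolding Q_at_y_def by (rule vars_in_subst[OF vars_in_UNIV]) (simp add: vars_in_Var)

lemma vars_in_subst_Q_at_y: "vars_in (subst (Q_at_y Q) p) {n..<2*n}"
  by (rule vars_in_subst[OF vars_in_UNIV vars_in_Q_at_y])

lemma subst_G_Q_at_y:
  assumes k: "k < n"
  shows "subst G (Q_at_y Q k) = Var k"
proof -
  have "subst G (Q_at_y Q k) = subst (\<lambda>v. subst G (if v < n then Var (n + v) else 0)) (Q k)"
    unfolding Q_at_y_def by (rule subst_subst)
  also have "\<dots> = subst F (Q k)"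
    by (rule subst_cong[of _ "{..<n}"]) (use Q_vars k in \<open>simp_all add: G_y\<close>)
  finally show ?thesis
    using FQ k by simp
qed

lemma subst_G_subst_Q_at_y: "vars_in p {..<n} \<Longrightarrow> subst G (subst (Q_at_y Q) p) = p"
  unfolding subst_subst by (rule subst_eq_self) (auto simp: subst_G_Q_at_y)

lemma subst_Q_at_y_F: "i < n \<Longrightarrow> subst (Q_at_y Q) (F i) = Var (n + i)"
  unfolding Q_at_y_def subst_subst[symmetric] using QF by simp

lemma subst_G_inverse_eq: "vars_in p {..<n} \<Longrightarrow> subst (G_inverse Q N) p = subst (Q_at_y Q) p"
  by (rule subst_cong) (auto simp: G_inverse_def)

lemma vars_in_G_inverse: "j < 2*n \<Longrightarrow> vars_in (G_inverse Q N j) {..<2*n}"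
proof (cases "j < n")
  case True
  then show ?thesis
    using vars_in_Q_at_y[of j] by (simp add: G_inverse_def) (erule vars_in_mono, auto)
next
  case False
  have "vars_in (subst (Q_at_y Q) p) {..<2*n}" for p
    using vars_in_subst_Q_at_y by (rule vars_in_mono) auto
  moreover assume "j < 2*n"
  ultimately show ?thesis
    unfolding G_inverse_def using False
    by (simp, intro vars_in_sum vars_in_mult vars_in_diff vars_in_Var) auto
qed

lemma subst_G_inverse_G_x:
  assumes j: "j < n"
  shows "subst (G_inverse Q N) (G j) = Var j"
proof -
  let ?s = "subst (Q_at_y Q)"
  have "subst (G_inverse Q N) (G j) =
      ?s (pdiff j f) + (\<Sum>i<n. G_inverse Q N (n + i) * ?s (pdiff j (F i)))"
    unfolding G_x[OF j] subst_add subst_sum subst_mult subst_Var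
    using f_vars vars_in_pdiff_F
    by (intro arg_cong2[where f = "(+)"] sum.cong refl arg_cong2[where f = "(*)"])
      (simp_all add: subst_G_inverse_eq vars_in_pdiff)
  also have "(\<Sum>i<n. G_inverse Q N (n + i) * ?s (pdiff j (F i))) =
      (\<Sum>i<n. \<Sum>k<n. (Var k - ?s (pdiff k f)) * (?s (N k i) * ?s (pdiff j (F i))))"
    unfolding G_inverse_y sum_distrib_right by (intro sum.cong refl) (simp only: ac_simps)
  also have "\<dots> = (\<Sum>k<n. (Var k - ?s (pdiff k f)) * ?s (\<Sum>i<n. N k i * pdiff j (F i)))"
    unfolding subst_sum subst_mult sum_distrib_left by (rule sum.swap)
  also have "\<dots> = (\<Sum>k<n. if k = j then Var k - ?s (pdiff k f) else 0)"
    using j by (intro sum.cong refl) (simp add: N_left)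
  also have "\<dots> = Var j - ?s (pdiff j f)"
    using j by simp
  finally show ?thesis
    by simp
qed

lemma subst_G_inverse_G: "j < 2*n \<Longrightarrow> subst (G_inverse Q N) (G j) = Var j"
proof (cases "j < n")
  case False
  moreover assume "j < 2*n"
  ultimately have "j = n + (j - n)" "j - n < n"
    by simp_all
  moreover have "subst (G_inverse Q N) (F i) = subst (Q_at_y Q) (F i)" if "i < n" for i
    using F_vars that by (simp add: subst_G_inverse_eq)
  ultimately show ?thesis
    by (metis G_y subst_Q_at_y_F)
qed (simp add: subst_G_inverse_G_x)

lemma subst_G_G_inverse_y:
  assumes i: "i < n"
  shows "subst G (G_inverse Q N (n + i)) = Var (n + i)"
proof -
  have "subst G (G_inverse Q N (n + i)) = (\<Sum>k<n. N k i * (G k - pdiff k f))"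
    unfolding G_inverse_y subst_sum subst_mult subst.hom_minus subst_Var
    by (intro sum.cong refl)
      (simp add: subst_G_subst_Q_at_y N_vars vars_in_pdiff[OF f_vars])
  also have "\<dots> = (\<Sum>k<n. \<Sum>l<n. N k i * (Var (n + l) * pdiff k (F l)))"
    by (intro sum.cong refl) (simp add: G_x sum_distrib_left)
  also have "\<dots> = (\<Sum>k<n. \<Sum>l<n. Var (n + l) * (pdiff k (F l) * N k i))"
    by (simp only: ac_simps)
  also have "\<dots> = (\<Sum>l<n. Var (n + l) * (\<Sum>k<n. pdiff k (F l) * N k i))"
    unfolding sum_distrib_left by (rule sum.swap)
  also have "\<dots> = (\<Sum>l<n. if l = i then Var (n + l) else 0)"
    using i by (intro sum.cong refl) (simp add: N_right)
  also have "\<dots> = Var (n + i)"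
    using i by simp
  finally show ?thesis .
qed

lemma subst_G_G_inverse: "j < 2*n \<Longrightarrow> subst G (G_inverse Q N j) = Var j"
proof (cases "j < n")
  case False
  moreover assume "j < 2*n"
  ultimately have "j = n + (j - n)" "j - n < n"
    by simp_all
  then show ?thesis
    by (metis subst_G_G_inverse_y)
qed (simp add: G_inverse_def subst_G_Q_at_y)

end

lemma poly_map_invertible_G_if_F:
  assumes "poly_map_invertible n F"
  shows "poly_map_invertible (2*n) G"
proof -
  obtain Q where Q: "\<forall>i<n. vars_in (Q i) {..<n}" "\<forall>i<n. subst Q (F i) = Var i"
    "\<forall>i<n. subst F (Q i) = Var i"
    using assms unfolding poly_map_invertible_def by blast
  obtain d where d: "det (jac n F) = Const d" "d \<noteq> 0"
    using keller_if_poly_map_invertible[OF assms] unfolding keller_def by blast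
  obtain N where N: "\<And>k i. vars_in (N k i) {..<n}"
    "\<And>k l. k < n \<Longrightarrow> l < n \<Longrightarrow> (\<Sum>i<n. N k i * pdiff l (F i)) = (if k = l then 1 else 0)"
    "\<And>k l. k < n \<Longrightarrow> l < n \<Longrightarrow> (\<Sum>i<n. pdiff i (F l) * N i k) = (if l = k then 1 else 0)"
    using polynomial_inverse_jac[OF F_vars d] by blast
  show ?thesis
    unfolding poly_map_invertible_def
    using vars_in_G_inverse[OF Q N] subst_G_inverse_G[OF Q N] subst_G_G_inverse[OF Q N] by blast
qed

context
  fixes H :: "nat \<Rightarrow> 'a mpoly"
  assumes H_vars: "\<forall>i<2*n. vars_in (H i) {..<2*n}"
    and HG: "\<forall>i<2*n. subst H (G i) = Var i"
    and GH: "\<forall>i<2*n. subst G (H i) = Var i"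
begin

lemma subst_H_subst_G: "vars_in p {..<2*n} \<Longrightarrow> subst H (subst G p) = p"
  unfolding subst_subst by (rule subst_eq_self) (use HG in auto)

text \<open>By the chain rule, \<partial>(H_i \<circ> G)/\<partial>y = 0 says that J(F) annihilates the vector
  ((\<partial>H_i/\<partial>x_v) \<circ> G)_v, and J(F) is invertible.\<close>
lemma pdiff_x_H_x:
  assumes i: "i < n" and v: "v < n"
  shows "pdiff v (H i) = 0"
proof -
  define w where "w = (\<lambda>v. subst G (pdiff v (H i)))"
  have H_i: "vars_in (H i) {..<2*n}"
    using H_vars i by simp
  have annihilate: "(\<Sum>u<n. jac n F $$ (l, u) * w u) = 0" if l: "l < n" for l
  proof -
    have "0 = pdiff (n + l) (subst G (H i))"
      using GH i by (simp add: pdiff_Var)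
    also have "\<dots> = (\<Sum>v<n. subst G (pdiff v (H i)) * pdiff (n + l) (G v)) +
        (\<Sum>k<n. subst G (pdiff (n + k) (H i)) * pdiff (n + l) (G (n + k)))"
      unfolding pdiff_subst[OF H_i finite_lessThan] by (simp only: mult_2 sum_lessThan_add)
    also have "\<dots> = (\<Sum>u<n. jac n F $$ (l, u) * w u)"
      using l by (simp add: pdiff_y_G_x pdiff_y_G_y jac_index w_def mult.commute)
    finally show ?thesis
      by simp
  qed
  have "(\<Sum>k<n. adj_mat (jac n F) $$ (v, k) * (\<Sum>u<n. jac n F $$ (k, u) * w u)) = 0"
    by (intro sum.neutral) (simp add: annihilate)
  then have "det (jac n F) * w v = 0"
    unfolding adj_mat_mult_sum[OF jac_carrier v] .
  moreover have "det (jac n F) \<noteq> 0"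
    using det_jac_F_neq_0_if_keller_G keller_if_poly_map_invertible H_vars HG GH
    unfolding poly_map_invertible_def by blast
  ultimately have "w v = 0"
    by simp
  then show ?thesis
    using subst_H_subst_G[OF vars_in_pdiff[OF H_i], of v] by (simp add: w_def)
qed

lemma vars_in_H_x:
  assumes i: "i < n"
  shows "vars_in (H i) {n..<2*n}"
proof -
  have "vars_in (H i) ({..<2*n} - {..<n})"
    by (rule vars_in_Diff_if_pdiff_eq_0) (use H_vars i pdiff_x_H_x in auto)
  moreover have "{..<2*n} - {..<n} = {n..<2*n}"
    by auto
  ultimately show ?thesis
    by simp
qed

definition H_x_at_x :: "nat \<Rightarrow> 'a mpoly" where
  "H_x_at_x k = subst (\<lambda>v. if v < n then 0 else Var (v - n)) (H k)"

lemma vars_in_H_x_at_x: "i < n \<Longrightarrow> vars_in (H_x_at_x i) {..<n}"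
  unfolding H_x_at_x_def
  by (rule vars_in_subst[OF vars_in_H_x]) (auto intro: vars_in_Var)

lemma subst_F_H_x_at_x:
  assumes i: "i < n"
  shows "subst F (H_x_at_x i) = Var i"
proof -
  have "subst F (H_x_at_x i) = subst (\<lambda>v. subst F (if v < n then 0 else Var (v - n))) (H i)"
    unfolding H_x_at_x_def by (rule subst_subst)
  also have "\<dots> = subst G (H i)"
  proof (rule subst_cong[OF vars_in_H_x[OF i]])
    fix v assume "v \<in> {n..<2*n}"
    then have "v = n + (v - n)" "v - n < n"
      by auto
    then show "subst F (if v < n then 0 else Var (v - n)) = G v"
      by (metis G_y not_add_less1 subst_Var)
  qed
  finally show ?thesis
    using GH i by simp
qed

lemma subst_H_x_at_x_F:
  assumes i: "i < n"
  shows "subst H_x_at_x (F i) = Var i"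
proof -
  have "subst H (F i) = Var (n + i)"
    using HG G_y[OF i] i by (metis add_less_cancel_left mult_2)
  then show ?thesis
    unfolding H_x_at_x_def subst_subst[symmetric] by simp
qed

end

lemma poly_map_invertible_F_if_G:
  assumes "poly_map_invertible (2*n) G"
  shows "poly_map_invertible n F"
proof -
  obtain H where H: "\<forall>i<2*n. vars_in (H i) {..<2*n}" "\<forall>i<2*n. subst H (G i) = Var i"
    "\<forall>i<2*n. subst G (H i) = Var i"
    using assms unfolding poly_map_invertible_def by blast
  show ?thesis
    unfolding poly_map_invertible_def
    using vars_in_H_x_at_x[OF H] subst_H_x_at_x_F[OF H] subst_F_H_x_at_x[OF H] by blast
qed

end

theorem lemma7p5:
  fixes n :: nat
    and F :: "nat \<Rightarrow> 'a::field_char_0 mpoly"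
    and f :: "'a mpoly"
    and G :: "nat \<Rightarrow> 'a mpoly"
  assumes F_poly: "\<forall>i<n. vars_in (F i) {..<n}"
    and f_poly: "vars_in f {..<n}"
    and G_def: "\<forall>j<2*n. G j = pdiff j (f + (\<Sum>i<n. Var (n + i) * F i))"
  shows "det (jac (2*n) G) = (-1)^n * (det (jac n F))^2 \<and>
         (poly_map_invertible n F \<longleftrightarrow> poly_map_invertible (2*n) G) \<and>
         (keller n F \<longrightarrow>
           (\<forall>\<mu> :: nat \<Rightarrow> 'a. (\<exists>i<n. \<mu> i \<noteq> 0) \<longrightarrow>
              irreducible ((\<Sum>i<2*n. Const (\<mu> i) * G i) + Const (\<mu> (2*n)))))"
proof -
  interpret gradient_map n F f G
    using assms by unfold_locales
  have "irreducible ((\<Sum>i<2*n. Const (\<mu> i) * G i) + Const (\<mu> (2*n)))"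
    if "keller n F" "\<exists>i<n. \<mu> i \<noteq> 0" for \<mu>
    using irreducible_G_combination that unfolding G_combination_def by blast
  then show ?thesis
    using det_jac_G poly_map_invertible_G_if_F poly_map_invertible_F_if_G by blast
qed

end
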